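(* In the Setting below, let $I$ be an $\mathfrak n$-primary ideal of $S$. Then $$g(I)=c(I)-1=\max\{\mathrm{Val}(a)\mid a\in (I:_K\mathfrak n)\setminus I\}.$$
   Context: Setting: $(S,\mathfrak n)$ is a one-dimensional Noetherian local domain, not regular, with infinite residue field $k$ and quotient field $K$; its integral closure $\overline S$ in $K$ is a DVR and a finite $S$-module, with uniformizer $t$, and $S/\mathfrak n\to\overline S/t\overline S$ is an isomorphism. $\mathrm{Val}$ denotes the valuation of $\overline S$ on $K$ with $\mathrm{Val}(t)=1$. For fractional ideals, $I:_KJ=\{a\in K\mid aJ\subseteq I\}$. For an ideal $I$, $\mathfrak C_I=I:_K\overline S$ and $c(I)$ is the integer with $\mathfrak C_I=t^{c(I)}\overline S$. The Frobenius number of $I$ is $g(I)=\max\{\mathrm{Val}(a)\mid a\in K\setminus I,\ a\neq0\}$. *)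

theory Defs
  imports Main
begin

text \<open>All rings live inside a fixed field K, represented by the type 'a (K = UNIV).
Subrings and ideals are sets of elements of 'a.\<close>

definition subring :: "'a::field set \<Rightarrow> bool" where
  "subring S \<longleftrightarrow> 0 \<in> S \<and> 1 \<in> S \<and> (\<forall>x\<in>S. \<forall>y\<in>S. x + y \<in> S \<and> x - y \<in> S \<and> x * y \<in> S)"

definition quotient_field_of :: "'a::field set \<Rightarrow> bool" where
  "quotient_field_of S \<longleftrightarrow> (\<forall>x. \<exists>a\<in>S. \<exists>b\<in>S. b \<noteq> 0 \<and> x = a / b)"

definition ideal_of :: "'a::field set \<Rightarrow> 'a set \<Rightarrow> bool" where
  "ideal_of S I \<longleftrightarrow> I \<subseteq> S \<and> 0 \<in> I \<and> (\<forall>x\<in>I. \<forall>y\<in>I. x + y \<in> I) \<and> (\<forall>s\<in>S. \<forall>x\<in>I. s * x \<in> I)"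

definition S_span :: "'a::field set \<Rightarrow> 'a set \<Rightarrow> 'a set" where
  "S_span S F = {(\<Sum>f\<in>F. r f * f) | r. \<forall>f\<in>F. r f \<in> S}"

definition noetherian :: "'a::field set \<Rightarrow> bool" where
  "noetherian S \<longleftrightarrow> (\<forall>J. ideal_of S J \<longrightarrow> (\<exists>F. finite F \<and> F \<subseteq> S \<and> J = S_span S F))"

definition nonunits :: "'a::field set \<Rightarrow> 'a set" where
  "nonunits S = {x \<in> S. \<not> (x \<noteq> 0 \<and> inverse x \<in> S)}"

text \<open>Local: the non-units form an ideal, which is then the unique maximal ideal n.\<close>
definition local_ring :: "'a::field set \<Rightarrow> bool" where
  "local_ring S \<longleftrightarrow> ideal_of S (nonunits S)"

definition prime_ideal_of :: "'a::field set \<Rightarrow> 'a set \<Rightarrow> bool" where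
  "prime_ideal_of S P \<longleftrightarrow> ideal_of S P \<and> P \<noteq> S \<and> (\<forall>x\<in>S. \<forall>y\<in>S. x * y \<in> P \<longrightarrow> x \<in> P \<or> y \<in> P)"

definition one_dimensional :: "'a::field set \<Rightarrow> bool" where
  "one_dimensional S \<longleftrightarrow> nonunits S \<noteq> {0} \<and>
     (\<forall>P. prime_ideal_of S P \<longrightarrow> P = {0} \<or> P = nonunits S)"

text \<open>A one-dimensional Noetherian local ring is regular iff its maximal ideal is principal.\<close>
definition regular_1dim :: "'a::field set \<Rightarrow> bool" where
  "regular_1dim S \<longleftrightarrow> (\<exists>x\<in>S. nonunits S = {s * x | s. s \<in> S})"

definition residue_field :: "'a::field set \<Rightarrow> 'a set set" where
  "residue_field S = {{y \<in> S. x - y \<in> nonunits S} | x. x \<in> S}"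

definition integral_over :: "'a::field set \<Rightarrow> 'a \<Rightarrow> bool" where
  "integral_over S x \<longleftrightarrow> (\<exists>n::nat. \<exists>c. (\<forall>i<n. c i \<in> S) \<and> x ^ n + (\<Sum>i<n. c i * x ^ i) = 0)"

definition integral_closure :: "'a::field set \<Rightarrow> 'a set" where
  "integral_closure S = {x. integral_over S x}"

text \<open>A discrete valuation v on K (values on nonzero elements), normalized by Val t = 1.\<close>
definition discrete_valuation :: "('a::field \<Rightarrow> int) \<Rightarrow> bool" where
  "discrete_valuation v \<longleftrightarrow>
     (\<forall>x y. x \<noteq> 0 \<longrightarrow> y \<noteq> 0 \<longrightarrow> v (x * y) = v x + v y) \<and>
     (\<forall>x y. x \<noteq> 0 \<longrightarrow> y \<noteq> 0 \<longrightarrow> x + y \<noteq> 0 \<longrightarrow> v (x + y) \<ge> min (v x) (v y)) \<and>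
     (\<exists>t. t \<noteq> 0 \<and> v t = 1)"

text \<open>The valuation ring of v (here: the integral closure S-bar).\<close>
definition val_ring :: "('a::field \<Rightarrow> int) \<Rightarrow> 'a set" where
  "val_ring v = {x. x = 0 \<or> 0 \<le> v x}"

definition colonK :: "'a::field set \<Rightarrow> 'a set \<Rightarrow> 'a set" where
  "colonK I J = {a. \<forall>x\<in>J. a * x \<in> I}"

definition cond_exp :: "('a::field \<Rightarrow> int) \<Rightarrow> 'a set \<Rightarrow> int" where
  "cond_exp v I = (THE c. colonK I (val_ring v) = {x. x = 0 \<or> c \<le> v x})"

definition frobenius :: "('a::field \<Rightarrow> int) \<Rightarrow> 'a set \<Rightarrow> int" where
  "frobenius v I = (GREATEST m. m \<in> {v a | a. a \<notin> I \<and> a \<noteq> 0})"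

definition is_max :: "int \<Rightarrow> int set \<Rightarrow> bool" where
  "is_max m A \<longleftrightarrow> m \<in> A \<and> (\<forall>x\<in>A. x \<le> m)"

definition primary_to_max :: "'a::field set \<Rightarrow> 'a set \<Rightarrow> bool" where
  "primary_to_max S I \<longleftrightarrow> ideal_of S I \<and> I \<noteq> S \<and> (\<forall>x\<in>nonunits S. \<exists>k::nat. x ^ k \<in> I)"

end

theory Submission
  imports Defs
begin

text \<open>
  The conductor \<open>C = I :\<^sub>K S-bar\<close> is a nonzero \<open>S-bar\<close>-submodule of \<open>I\<close> (a common
  denominator of generators of \<open>S-bar\<close> times a power of a nonunit lies in it), so it is
  \<open>t\<^sup>c S-bar\<close>, with \<open>c\<close> the least value it attains. Every nonzero element outside \<open>I\<close> lies
  outside \<open>C\<close>, hence has value at most \<open>c - 1\<close>. If all elements of value \<open>c - 1\<close> were in \<open>I\<close>,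
  then \<open>t\<^sup>c\<^sup>-\<^sup>1 S-bar\<close> would be contained in \<open>I\<close> and hence in \<open>C\<close>, which is absurd; so some
  \<open>w \<notin> I\<close> has value \<open>c - 1\<close>. Nonunits of \<open>S\<close> have positive value, so \<open>w\<close> multiplies
  \<open>\<frak>n\<close> into \<open>C \<subseteq> I\<close>, i.e. \<open>w \<in> I :\<^sub>K \<frak>n\<close>.
\<close>

lemma discrete_valuation_mult:
  "discrete_valuation v \<Longrightarrow> x \<noteq> 0 \<Longrightarrow> y \<noteq> 0 \<Longrightarrow> v (x * y) = v x + v y"
  unfolding discrete_valuation_def by blast

lemma discrete_valuation_one: "discrete_valuation v \<Longrightarrow> v 1 = 0"
  using discrete_valuation_mult[of v 1 1] by simp

lemma discrete_valuation_inverse: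
  "discrete_valuation v \<Longrightarrow> x \<noteq> 0 \<Longrightarrow> v (inverse x) = - v x"
  using discrete_valuation_mult[of v x "inverse x"] discrete_valuation_one[of v] by simp

lemma discrete_valuation_power:
  "discrete_valuation v \<Longrightarrow> x \<noteq> 0 \<Longrightarrow> v (x ^ n) = int n * v x"
  by (induction n) (auto simp: discrete_valuation_one discrete_valuation_mult algebra_simps)

lemma discrete_valuation_surj:
  assumes "discrete_valuation v"
  obtains x where "x \<noteq> 0" "v x = m"
proof -
  obtain t where t: "t \<noteq> 0" "v t = 1"
    using assms unfolding discrete_valuation_def by blast
  show ?thesis
  proof (cases "m \<ge> 0")
    case True
    then show ?thesis
      using that[of "t ^ nat m"] t discrete_valuation_power[OF assms, of t "nat m"] by simp
  next
    case False
    then show ?thesis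
      using that[of "inverse (t ^ nat (- m))"] t discrete_valuation_power[OF assms, of t "nat (- m)"]
        discrete_valuation_inverse[OF assms, of "t ^ nat (- m)"] by simp
  qed
qed

lemma val_ring_iff: "x \<noteq> 0 \<Longrightarrow> x \<in> val_ring v \<longleftrightarrow> 0 \<le> v x"
  unfolding val_ring_def by simp

lemma one_in_val_ring: "discrete_valuation v \<Longrightarrow> 1 \<in> val_ring v"
  unfolding val_ring_def by (simp add: discrete_valuation_one)

lemma val_ring_mult:
  "discrete_valuation v \<Longrightarrow> x \<in> val_ring v \<Longrightarrow> y \<in> val_ring v \<Longrightarrow> x * y \<in> val_ring v"
  unfolding val_ring_def by (cases "x = 0 \<or> y = 0") (auto simp: discrete_valuation_mult)

lemma subring_sum:
  assumes "subring S" "finite F" "\<forall>f\<in>F. g f \<in> S"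
  shows "sum g F \<in> S"
  using assms(2,3) by (induction F rule: finite_induct) (use assms(1) in \<open>auto simp: subring_def\<close>)

lemma subring_power: "subring S \<Longrightarrow> x \<in> S \<Longrightarrow> x ^ n \<in> S"
  by (induction n) (auto simp: subring_def)

lemma subring_uminus: "subring S \<Longrightarrow> x \<in> S \<Longrightarrow> - x \<in> S"
  unfolding subring_def by (metis diff_0)

lemma subring_subset_integral_closure:
  assumes "subring S" shows "S \<subseteq> integral_closure S"
proof
  fix x assume "x \<in> S"
  then have "integral_over S x"
    unfolding integral_over_def using subring_uminus[OF assms]
    by (intro exI[of _ "1::nat"] exI[of _ "\<lambda>_. - x"]) auto
  then show "x \<in> integral_closure S" unfolding integral_closure_def by simp
qed

text \<open>Multiplying the integral equation of \<open>x\<inverse>\<close> of degree \<open>m + 1\<close> by \<open>x\<^sup>m\<close> writes \<open>x\<inverse>\<close> as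
  a polynomial in \<open>x\<close> with coefficients in \<open>S\<close>.\<close>
lemma inverse_in_subring_if_integral:
  assumes S: "subring S" and x: "x \<in> S" "x \<noteq> 0" and int: "integral_over S (inverse x)"
  shows "inverse x \<in> S"
proof -
  obtain n c where c: "\<forall>i<n. c i \<in> S"
    and eq: "(inverse x) ^ n + (\<Sum>i<n. c i * (inverse x) ^ i) = 0"
    using int unfolding integral_over_def by blast
  show ?thesis
  proof (cases n)
    case 0
    then show ?thesis using eq by simp
  next
    case (Suc m)
    define y where "y = inverse x"
    have xy: "x * y = 1" using x y_def by simp
    have "x ^ m * y ^ Suc m = (x * y) ^ m * y" by (simp add: power_mult_distrib ac_simps)
    then have lead: "x ^ m * y ^ Suc m = y" using xy by simp
    have rest: "x ^ m * (\<Sum>i<Suc m. c i * y ^ i) = (\<Sum>i<Suc m. c i * x ^ (m - i))"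
      unfolding sum_distrib_left
    proof (rule sum.cong)
      fix i assume "i \<in> {..<Suc m}"
      then have "x ^ m = x ^ (m - i) * x ^ i" by (simp add: power_add[symmetric])
      then have "x ^ m * (c i * y ^ i) = c i * x ^ (m - i) * (x * y) ^ i"
        by (simp add: power_mult_distrib ac_simps)
      then show "x ^ m * (c i * y ^ i) = c i * x ^ (m - i)" using xy by simp
    qed simp
    have "x ^ m * (y ^ Suc m + (\<Sum>i<Suc m. c i * y ^ i)) = 0" using eq Suc y_def by simp
    then have "y + (\<Sum>i<Suc m. c i * x ^ (m - i)) = 0"
      unfolding distrib_left lead rest .
    then have "y = - (\<Sum>i<Suc m. c i * x ^ (m - i))"
      by (metis add.commute add_eq_0_iff)
    moreover have "(\<Sum>i<Suc m. c i * x ^ (m - i)) \<in> S"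
      using c Suc S x by (intro subring_sum) (auto simp: subring_def subring_power)
    ultimately show ?thesis using y_def subring_uminus[OF S] by metis
  qed
qed

lemma nonunit_val_pos:
  assumes S: "subring S" and dv: "discrete_valuation v"
    and closure: "integral_closure S = val_ring v"
    and y: "y \<in> nonunits S" "y \<noteq> 0"
  shows "1 \<le> v y"
proof -
  have yS: "y \<in> S" and not_unit: "inverse y \<notin> S"
    using y unfolding nonunits_def by auto
  have "0 \<le> v y"
    using yS y(2) subring_subset_integral_closure[OF S] closure val_ring_iff by blast
  moreover have "v y \<noteq> 0"
  proof
    assume "v y = 0"
    then have "inverse y \<in> integral_closure S"
      using closure y(2) val_ring_iff[of "inverse y" v] discrete_valuation_inverse[OF dv] by simp
    then show False
      using inverse_in_subring_if_integral[OF S yS y(2)] not_unit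
      unfolding integral_closure_def by blast
  qed
  ultimately show ?thesis by simp
qed

lemma nonzero_nonunit_exists:
  assumes "subring S" "one_dimensional S"
  obtains x where "x \<in> nonunits S" "x \<noteq> 0"
proof -
  have "0 \<in> nonunits S" using assms(1) unfolding nonunits_def subring_def by auto
  moreover have "nonunits S \<noteq> {0}" using assms(2) unfolding one_dimensional_def by blast
  ultimately show ?thesis using that by blast
qed

lemma common_denominator:
  assumes S: "subring S" and K: "quotient_field_of S" and "finite F"
  obtains d where "d \<in> S" "d \<noteq> 0" "\<forall>f\<in>F. d * f \<in> S"
proof -
  have "\<exists>d\<in>S. d \<noteq> 0 \<and> (\<forall>f\<in>F. d * f \<in> S)"
    using \<open>finite F\<close>
  proof (induction F rule: finite_induct)
    case empty
    then show ?case using S unfolding subring_def by (intro bexI[of _ 1]) auto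
  next
    case (insert f F)
    then obtain d where d: "d \<in> S" "d \<noteq> 0" "\<forall>g\<in>F. d * g \<in> S" by blast
    obtain a b where ab: "a \<in> S" "b \<in> S" "b \<noteq> 0" "f = a / b"
      using K unfolding quotient_field_of_def by blast
    have "b * (d * g) \<in> S" if "g \<in> F" for g
      using that d ab S unfolding subring_def by blast
    moreover have "d * a \<in> S" using d ab S unfolding subring_def by blast
    ultimately show ?case
      using d ab S unfolding subring_def by (intro bexI[of _ "d * b"]) (auto simp: ac_simps)
  qed
  then show ?thesis using that by blast
qed

lemma S_span_mult_common_denominator:
  assumes S: "subring S" and "finite F" and d: "\<forall>f\<in>F. d * f \<in> S" and y: "y \<in> S_span S F"
  shows "d * y \<in> S"
proof -
  obtain r where r: "y = (\<Sum>f\<in>F. r f * f)" "\<forall>f\<in>F. r f \<in> S"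
    using y unfolding S_span_def by blast
  have "d * y = (\<Sum>f\<in>F. r f * (d * f))"
    unfolding r(1) sum_distrib_left by (simp add: ac_simps)
  also have "\<dots> \<in> S"
    using r(2) d \<open>finite F\<close> S by (intro subring_sum) (auto simp: subring_def)
  finally show ?thesis .
qed

lemma colonK_S_span_nonzero:
  assumes S: "subring S" and K: "quotient_field_of S" and F: "finite F"
    and I: "ideal_of S I" and x: "x \<in> I" "x \<noteq> 0"
  obtains e where "e \<in> colonK I (S_span S F)" "e \<noteq> 0"
proof -
  obtain d where d: "d \<in> S" "d \<noteq> 0" "\<forall>f\<in>F. d * f \<in> S"
    using common_denominator[OF S K F] by blast
  have "x * d * y \<in> I" if "y \<in> S_span S F" for y
    using S_span_mult_common_denominator[OF S F d(3) that] x(1) I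
    unfolding ideal_of_def by (metis mult.assoc mult.commute)
  then show ?thesis using that[of "x * d"] x(2) d(2) unfolding colonK_def by simp
qed

lemma colonK_subset: "1 \<in> J \<Longrightarrow> colonK I J \<subseteq> I"
  unfolding colonK_def by force

lemma colonK_val_ring_mult:
  assumes "discrete_valuation v" "a \<in> colonK I (val_ring v)" "b \<in> val_ring v"
  shows "a * b \<in> colonK I (val_ring v)"
proof -
  have "a * (b * x) \<in> I" if "x \<in> val_ring v" for x
    using assms that val_ring_mult unfolding colonK_def by blast
  then show ?thesis unfolding colonK_def by (simp add: mult.assoc)
qed

lemma ex_min_val:
  fixes v :: "'a::zero \<Rightarrow> int"
  assumes "a \<in> A" "a \<noteq> 0" and bound: "\<forall>x\<in>A. x \<noteq> 0 \<longrightarrow> m \<le> v x"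
  obtains a0 where "a0 \<in> A" "a0 \<noteq> 0" "\<forall>x\<in>A. x \<noteq> 0 \<longrightarrow> v a0 \<le> v x"
proof -
  obtain a0 where a0: "a0 \<in> A \<and> a0 \<noteq> 0"
    and least: "\<forall>x. x \<in> A \<and> x \<noteq> 0 \<longrightarrow> nat (v a0 - m) \<le> nat (v x - m)"
    using ex_has_least_nat[of "\<lambda>x. x \<in> A \<and> x \<noteq> 0" a "\<lambda>x. nat (v x - m)"] assms(1,2) by blast
  have "v a0 \<le> v x" if "x \<in> A" "x \<noteq> 0" for x
    using least that bound a0 by fastforce
  then show ?thesis using that a0 by blast
qed

lemma val_ring_submodule_eq:
  assumes dv: "discrete_valuation v"
    and M: "\<forall>a\<in>M. \<forall>b\<in>val_ring v. a * b \<in> M"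
    and a0: "a0 \<in> M" "a0 \<noteq> 0" "\<forall>a\<in>M. a \<noteq> 0 \<longrightarrow> v a0 \<le> v a"
  shows "M = {x. x = 0 \<or> v a0 \<le> v x}"
proof (intro equalityI subsetI)
  fix x assume "x \<in> {x. x = 0 \<or> v a0 \<le> v x}"
  then consider "x = 0" | "x \<noteq> 0" "v a0 \<le> v x" by blast
  then show "x \<in> M"
  proof cases
    case 1
    then show ?thesis using M a0(1) val_ring_def[of v] by force
  next
    case 2
    have "x / a0 \<in> val_ring v"
      using 2 a0(2) by (simp add: val_ring_def divide_inverse discrete_valuation_mult[OF dv]
          discrete_valuation_inverse[OF dv])
    then show ?thesis using M a0 by (metis nonzero_mult_div_cancel_left times_divide_eq_right)
  qed
qed (use a0(3) in auto)

lemma cond_exp_eqI: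
  assumes dv: "discrete_valuation v" and C: "colonK I (val_ring v) = {x. x = 0 \<or> c \<le> v x}"
  shows "cond_exp v I = c"
  unfolding cond_exp_def
proof (rule the_equality)
  fix c' assume C': "colonK I (val_ring v) = {x. x = 0 \<or> c' \<le> v x}"
  obtain z where z: "z \<noteq> 0" "v z = c" using discrete_valuation_surj[OF dv] .
  obtain z' where z': "z' \<noteq> 0" "v z' = c'" using discrete_valuation_surj[OF dv] .
  have "z \<in> {x. x = 0 \<or> c' \<le> v x}" "z' \<in> {x. x = 0 \<or> c \<le> v x}"
    using C C' z z' by auto
  then show "c' = c" using z z' by auto
qed (rule C)

lemma val_outside_le:
  assumes dv: "discrete_valuation v" and C: "colonK I (val_ring v) = {x. x = 0 \<or> c \<le> v x}"
    and a: "a \<notin> I" "a \<noteq> 0"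
  shows "v a \<le> c - 1"
  using a C colonK_subset[OF one_in_val_ring[OF dv], of I] by force

lemma val_outside_attained:
  assumes dv: "discrete_valuation v" and C: "colonK I (val_ring v) = {x. x = 0 \<or> c \<le> v x}"
  obtains w where "w \<notin> I" "w \<noteq> 0" "v w = c - 1"
proof -
  have C_I: "{x. x = 0 \<or> c \<le> v x} \<subseteq> I"
    using C colonK_subset[OF one_in_val_ring[OF dv]] by blast
  have "\<exists>w. w \<notin> I \<and> w \<noteq> 0 \<and> v w = c - 1"
  proof (rule ccontr)
    assume "\<nexists>w. w \<notin> I \<and> w \<noteq> 0 \<and> v w = c - 1"
    then have in_I: "a \<in> I" if "a \<noteq> 0" "v a = c - 1" for a using that by blast
    obtain z where z: "z \<noteq> 0" "v z = c - 1" using discrete_valuation_surj[OF dv] .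
    have "z * s \<in> I" if "s \<in> val_ring v" for s
    proof (cases "s = 0")
      case False
      then have "0 \<le> v s" using that val_ring_iff by blast
      then have "v (z * s) = c - 1 \<or> c \<le> v (z * s)"
        using z False discrete_valuation_mult[OF dv] by auto
      then show ?thesis using in_I C_I z(1) False by auto
    qed (use C_I in auto)
    then have "z \<in> colonK I (val_ring v)" unfolding colonK_def by blast
    then show False using C z by simp
  qed
  then show ?thesis using that by blast
qed

lemma colonK_nonunits_if_val:
  assumes dv: "discrete_valuation v" and C: "colonK I (val_ring v) = {x. x = 0 \<or> c \<le> v x}"
    and pos: "\<forall>y\<in>nonunits S. y \<noteq> 0 \<longrightarrow> 1 \<le> v y"
    and w: "w \<noteq> 0" "v w = c - 1"
  shows "w \<in> colonK I (nonunits S)"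
proof -
  have C_I: "{x. x = 0 \<or> c \<le> v x} \<subseteq> I"
    using C colonK_subset[OF one_in_val_ring[OF dv]] by blast
  have "w * y \<in> {x. x = 0 \<or> c \<le> v x}" if "y \<in> nonunits S" for y
    using that pos w discrete_valuation_mult[OF dv, of w y] by fastforce
  then show ?thesis using C_I unfolding colonK_def by blast
qed

lemma is_max_valI:
  "P w \<Longrightarrow> v w = m \<Longrightarrow> (\<And>a. P a \<Longrightarrow> v a \<le> m) \<Longrightarrow> is_max m {v a | a. P a}"
  unfolding is_max_def by blast

lemma frobenius_eqI: "is_max m {v a | a. a \<notin> I \<and> a \<noteq> 0} \<Longrightarrow> frobenius v I = m"
  unfolding frobenius_def is_max_def by (intro Greatest_equality) auto

theorem lemma4p3:
  fixes S I :: "'a::field set" and v :: "'a \<Rightarrow> int"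
  assumes "subring S" and "quotient_field_of S"
    and "noetherian S" and "local_ring S" and "one_dimensional S"
    and "\<not> regular_1dim S"
    and "infinite (residue_field S)"
    and "discrete_valuation v"
    and "integral_closure S = val_ring v"
    and "\<exists>F. finite F \<and> val_ring v = S_span S F"
    and "\<forall>y\<in>val_ring v. \<exists>x\<in>S. y - x = 0 \<or> 1 \<le> v (y - x)"
    and "primary_to_max S I"
  shows "frobenius v I = cond_exp v I - 1
    \<and> is_max (cond_exp v I - 1) {v a | a. a \<notin> I \<and> a \<noteq> 0}
    \<and> is_max (cond_exp v I - 1) {v a | a. a \<in> colonK I (nonunits S) - I}"
proof -
  note S = assms(1) and dv = assms(8) and closure = assms(9)
  have I: "ideal_of S I" and IS: "I \<subseteq> S" using assms(12) by (auto simp: primary_to_max_def ideal_of_def)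
  obtain x where x: "x \<in> nonunits S" "x \<noteq> 0" using nonzero_nonunit_exists[OF S assms(5)] .
  obtain k where xk: "x ^ k \<in> I" using assms(12) x(1) unfolding primary_to_max_def by blast
  obtain F where F: "finite F" "val_ring v = S_span S F" using assms(10) by blast
  have "x ^ k \<noteq> 0" using x(2) by simp
  with colonK_S_span_nonzero[OF S assms(2) F(1) I xk] obtain e
    where e: "e \<in> colonK I (val_ring v)" "e \<noteq> 0"
    unfolding F(2) by blast
  have "\<forall>a\<in>colonK I (val_ring v). a \<noteq> 0 \<longrightarrow> 0 \<le> v a"
    using colonK_subset[OF one_in_val_ring[OF dv]] IS subring_subset_integral_closure[OF S]
      closure val_ring_iff by blast
  then obtain a0 where a0: "a0 \<in> colonK I (val_ring v)" "a0 \<noteq> 0"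
    "\<forall>a\<in>colonK I (val_ring v). a \<noteq> 0 \<longrightarrow> v a0 \<le> v a"
    using ex_min_val[OF e] by blast
  define c where "c = v a0"
  have C: "colonK I (val_ring v) = {x. x = 0 \<or> c \<le> v x}"
    unfolding c_def using val_ring_submodule_eq[OF dv _ a0] colonK_val_ring_mult[OF dv] by blast
  obtain w where w: "w \<notin> I" "w \<noteq> 0" "v w = c - 1" using val_outside_attained[OF dv C] .
  have w_colon: "w \<in> colonK I (nonunits S)"
    using colonK_nonunits_if_val[OF dv C _ w(2,3)] nonunit_val_pos[OF S dv closure] by blast
  have "0 \<in> I" using I unfolding ideal_of_def by blast
  have max_outside: "is_max (c - 1) {v a | a. a \<notin> I \<and> a \<noteq> 0}"
    by (rule is_max_valI[of _ w]) (use w val_outside_le[OF dv C] in auto)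
  have "is_max (c - 1) {v a | a. a \<in> colonK I (nonunits S) - I}"
    by (rule is_max_valI[of _ w])
      (use w w_colon val_outside_le[OF dv C] \<open>0 \<in> I\<close> in auto)
  moreover have "frobenius v I = c - 1" using max_outside by (rule frobenius_eqI)
  ultimately show ?thesis using max_outside cond_exp_eqI[OF dv C] by simp
qed

end
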